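(* Let $X$ be an affine variety and $\mathcal{A}\subseteq\mathcal{D}(X)$ a graded cofinite subalgebra. Then the base $A=\mathcal{A}\cap\mathcal{O}(X)$ is a finitely generated $\mathbb{C}$-algebra and $\mathcal{O}(X)$ is a finitely generated $A$-module. In other words, with $Y=\operatorname{Spec}A$, the morphism $X\to Y$ is a finite surjective morphism of affine varieties.
   Context: Varieties are over $\mathbb{C}$ and irreducible. $\mathcal{D}(X)$ is the algebra of ($\mathbb{C}$-linear, Grothendieck) differential operators on $\mathcal{O}(X)$, filtered by order, with commutative associated graded algebra $\overline{\mathcal{D}}(X)$ (whose degree-$0$ part is $\mathcal{O}(X)$). A subalgebra $\mathcal{A}$ has induced filtration $\mathcal{A}\cap\mathcal{D}(X)_{\le d}$ with associated graded $\overline{\mathcal{A}}\subseteq\overline{\mathcal{D}}(X)$; $\mathcal{A}$ is graded cofinite if $\overline{\mathcal{D}}(X)$ is a finitely generated $\overline{\mathcal{A}}$-module. *)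

theory Defs
  imports "HOL-Algebra.Algebra" Complex_Main
begin

definition is_calg :: "('a, 'b) ring_scheme \<Rightarrow> (complex \<Rightarrow> 'a) \<Rightarrow> bool" where
  "is_calg R \<iota> \<longleftrightarrow> cring R \<and> (\<forall>c. \<iota> c \<in> carrier R) \<and> \<iota> 0 = \<zero>\<^bsub>R\<^esub> \<and> \<iota> 1 = \<one>\<^bsub>R\<^esub> \<and>
     (\<forall>a b. \<iota> (a + b) = \<iota> a \<oplus>\<^bsub>R\<^esub> \<iota> b) \<and> (\<forall>a b. \<iota> (a * b) = \<iota> a \<otimes>\<^bsub>R\<^esub> \<iota> b)"

definition fg_calg :: "('a, 'b) ring_scheme \<Rightarrow> (complex \<Rightarrow> 'a) \<Rightarrow> 'a set \<Rightarrow> bool" where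
  "fg_calg R \<iota> B \<longleftrightarrow> (\<exists>S. finite S \<and> S \<subseteq> B \<and> B = generate_ring R (range \<iota> \<union> S))"

text \<open>Coordinate ring of an (irreducible) affine variety over C: a finitely generated
C-algebra which is an integral domain.\<close>
definition affine_variety :: "('a, 'b) ring_scheme \<Rightarrow> (complex \<Rightarrow> 'a) \<Rightarrow> bool" where
  "affine_variety R \<iota> \<longleftrightarrow> domain R \<and> is_calg R \<iota> \<and> fg_calg R \<iota> (carrier R)"

definition fg_module_over :: "('a, 'b) ring_scheme \<Rightarrow> 'a set \<Rightarrow> bool" where
  "fg_module_over R A \<longleftrightarrow> (\<exists>G. finite G \<and> G \<subseteq> carrier R \<and>
     (\<forall>x\<in>carrier R. \<exists>a \<in> G \<rightarrow> A. x = finsum R (\<lambda>g. a g \<otimes>\<^bsub>R\<^esub> g) G))"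

definition op_zero :: "('a, 'b) ring_scheme \<Rightarrow> 'a \<Rightarrow> 'a" where
  "op_zero R = (\<lambda>x. if x \<in> carrier R then \<zero>\<^bsub>R\<^esub> else undefined)"
definition op_add :: "('a, 'b) ring_scheme \<Rightarrow> ('a \<Rightarrow> 'a) \<Rightarrow> ('a \<Rightarrow> 'a) \<Rightarrow> 'a \<Rightarrow> 'a" where
  "op_add R f g = (\<lambda>x. if x \<in> carrier R then f x \<oplus>\<^bsub>R\<^esub> g x else undefined)"
definition op_minus :: "('a, 'b) ring_scheme \<Rightarrow> ('a \<Rightarrow> 'a) \<Rightarrow> ('a \<Rightarrow> 'a) \<Rightarrow> 'a \<Rightarrow> 'a" where
  "op_minus R f g = (\<lambda>x. if x \<in> carrier R then f x \<ominus>\<^bsub>R\<^esub> g x else undefined)"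
definition op_comp :: "('a, 'b) ring_scheme \<Rightarrow> ('a \<Rightarrow> 'a) \<Rightarrow> ('a \<Rightarrow> 'a) \<Rightarrow> 'a \<Rightarrow> 'a" where
  "op_comp R f g = (\<lambda>x. if x \<in> carrier R then f (g x) else undefined)"
definition mult_op :: "('a, 'b) ring_scheme \<Rightarrow> 'a \<Rightarrow> 'a \<Rightarrow> 'a" where
  "mult_op R r = (\<lambda>x. if x \<in> carrier R then r \<otimes>\<^bsub>R\<^esub> x else undefined)"
definition op_sum :: "('a, 'b) ring_scheme \<Rightarrow> ('a \<Rightarrow> 'a) list \<Rightarrow> 'a \<Rightarrow> 'a" where
  "op_sum R fs = foldr (op_add R) fs (op_zero R)"

definition clinear :: "('a, 'b) ring_scheme \<Rightarrow> (complex \<Rightarrow> 'a) \<Rightarrow> ('a \<Rightarrow> 'a) \<Rightarrow> bool" where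
  "clinear R \<iota> f \<longleftrightarrow> f \<in> carrier R \<rightarrow> carrier R \<and> (\<forall>x. x \<notin> carrier R \<longrightarrow> f x = undefined) \<and>
     (\<forall>x\<in>carrier R. \<forall>y\<in>carrier R. f (x \<oplus>\<^bsub>R\<^esub> y) = f x \<oplus>\<^bsub>R\<^esub> f y) \<and>
     (\<forall>c. \<forall>x\<in>carrier R. f (\<iota> c \<otimes>\<^bsub>R\<^esub> x) = \<iota> c \<otimes>\<^bsub>R\<^esub> f x)"

definition commutator :: "('a, 'b) ring_scheme \<Rightarrow> ('a \<Rightarrow> 'a) \<Rightarrow> 'a \<Rightarrow> 'a \<Rightarrow> 'a" where
  "commutator R \<phi> r = op_minus R (op_comp R \<phi> (mult_op R r)) (op_comp R (mult_op R r) \<phi>)"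

text \<open>Grothendieck differential operators of order at most n:
 D_0 = O(X)-linear endomorphisms, D_(n+1) = C-linear phi with [phi, r] in D_n for all r.\<close>
fun diffop_le :: "('a, 'b) ring_scheme \<Rightarrow> (complex \<Rightarrow> 'a) \<Rightarrow> nat \<Rightarrow> ('a \<Rightarrow> 'a) set" where
  "diffop_le R \<iota> 0 = {\<phi>. clinear R \<iota> \<phi> \<and> (\<forall>r\<in>carrier R. commutator R \<phi> r = op_zero R)}"
| "diffop_le R \<iota> (Suc n) = {\<phi>. clinear R \<iota> \<phi> \<and> (\<forall>r\<in>carrier R. commutator R \<phi> r \<in> diffop_le R \<iota> n)}"

text \<open>D_(d-1), with D_(-1) = 0.\<close>
definition diffop_prev :: "('a, 'b) ring_scheme \<Rightarrow> (complex \<Rightarrow> 'a) \<Rightarrow> nat \<Rightarrow> ('a \<Rightarrow> 'a) set" where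
  "diffop_prev R \<iota> d = (if d = 0 then {op_zero R} else diffop_le R \<iota> (d - 1))"

definition diffops :: "('a, 'b) ring_scheme \<Rightarrow> (complex \<Rightarrow> 'a) \<Rightarrow> ('a \<Rightarrow> 'a) set" where
  "diffops R \<iota> = (\<Union>n. diffop_le R \<iota> n)"

definition diffop_subalgebra :: "('a, 'b) ring_scheme \<Rightarrow> (complex \<Rightarrow> 'a) \<Rightarrow> ('a \<Rightarrow> 'a) set \<Rightarrow> bool" where
  "diffop_subalgebra R \<iota> \<A> \<longleftrightarrow> \<A> \<subseteq> diffops R \<iota> \<and> mult_op R \<one>\<^bsub>R\<^esub> \<in> \<A> \<and>
     (\<forall>\<phi>\<in>\<A>. \<forall>\<psi>\<in>\<A>. op_add R \<phi> \<psi> \<in> \<A> \<and> op_comp R \<phi> \<psi> \<in> \<A>) \<and>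
     (\<forall>c. \<forall>\<phi>\<in>\<A>. op_comp R (mult_op R (\<iota> c)) \<phi> \<in> \<A>)"

text \<open>The base A = (calligraphic A) intersected with O(X), O(X) embedded as multiplication operators.\<close>
definition base_ring :: "('a, 'b) ring_scheme \<Rightarrow> ('a \<Rightarrow> 'a) set \<Rightarrow> 'a set" where
  "base_ring R \<A> = {r \<in> carrier R. mult_op R r \<in> \<A>}"

text \<open>An element of the associated graded of B (B = D(X) or a subalgebra with induced filtration)
is represented by a sequence s with s d in B intersected with D_d, representing the class of s d in
(B cap D_d)/(B cap D_(d-1)); only finitely many classes are nonzero.\<close>
definition gr_elem :: "('a, 'b) ring_scheme \<Rightarrow> (complex \<Rightarrow> 'a) \<Rightarrow> ('a \<Rightarrow> 'a) set \<Rightarrow> (nat \<Rightarrow> 'a \<Rightarrow> 'a) \<Rightarrow> bool" where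
  "gr_elem R \<iota> B s \<longleftrightarrow> (\<forall>d. s d \<in> B \<inter> diffop_le R \<iota> d) \<and> finite {d. s d \<notin> diffop_prev R \<iota> d}"

definition gr_eq :: "('a, 'b) ring_scheme \<Rightarrow> (complex \<Rightarrow> 'a) \<Rightarrow> (nat \<Rightarrow> 'a \<Rightarrow> 'a) \<Rightarrow> (nat \<Rightarrow> 'a \<Rightarrow> 'a) \<Rightarrow> bool" where
  "gr_eq R \<iota> s t \<longleftrightarrow> (\<forall>d. op_minus R (s d) (t d) \<in> diffop_prev R \<iota> d)"

definition gr_zero :: "('a, 'b) ring_scheme \<Rightarrow> nat \<Rightarrow> 'a \<Rightarrow> 'a" where
  "gr_zero R = (\<lambda>d. op_zero R)"
definition gr_add :: "('a, 'b) ring_scheme \<Rightarrow> (nat \<Rightarrow> 'a \<Rightarrow> 'a) \<Rightarrow> (nat \<Rightarrow> 'a \<Rightarrow> 'a) \<Rightarrow> nat \<Rightarrow> 'a \<Rightarrow> 'a" where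
  "gr_add R s t = (\<lambda>d. op_add R (s d) (t d))"
definition gr_mul :: "('a, 'b) ring_scheme \<Rightarrow> (nat \<Rightarrow> 'a \<Rightarrow> 'a) \<Rightarrow> (nat \<Rightarrow> 'a \<Rightarrow> 'a) \<Rightarrow> nat \<Rightarrow> 'a \<Rightarrow> 'a" where
  "gr_mul R s t = (\<lambda>d. op_sum R (map (\<lambda>i. op_comp R (s i) (t (d - i))) [0..<Suc d]))"

text \<open>Graded cofinite: gr D(X) is a finitely generated gr(A)-module.\<close>
definition graded_cofinite :: "('a, 'b) ring_scheme \<Rightarrow> (complex \<Rightarrow> 'a) \<Rightarrow> ('a \<Rightarrow> 'a) set \<Rightarrow> bool" where
  "graded_cofinite R \<iota> \<A> \<longleftrightarrow>
     (\<exists>gs. (\<forall>g\<in>set gs. gr_elem R \<iota> (diffops R \<iota>) g) \<and>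
        (\<forall>s. gr_elem R \<iota> (diffops R \<iota>) s \<longrightarrow>
           (\<exists>as. length as = length gs \<and> (\<forall>a\<in>set as. gr_elem R \<iota> \<A> a) \<and>
              gr_eq R \<iota> s (foldr (gr_add R) (map2 (gr_mul R) as gs) (gr_zero R)))))"

end

theory Submission
  imports Defs
begin

text \<open>
  Operators of order zero are exactly the multiplications by elements of \<open>\<O>(X)\<close>, so in degree 0
  the associated graded algebra of \<open>\<D>(X)\<close> is \<open>\<O>(X)\<close> and that of \<open>\<A>\<close> is the base \<open>A\<close>. Reading a
  finite generating set of \<open>gr \<D>(X)\<close> over \<open>gr \<A>\<close> in degree 0 therefore exhibits \<open>\<O>(X)\<close> as a
  finitely generated \<open>A\<close>-module. Now \<open>\<complex> \<subseteq> A \<subseteq> \<O>(X)\<close> with \<open>\<O>(X)\<close> a finitely generated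
  \<open>\<complex>\<close>-algebra and a finite \<open>A\<close>-module, and the Artin--Tate lemma shows that \<open>A\<close> is a finitely
  generated \<open>\<complex>\<close>-algebra. Artin--Tate rests on the Hilbert basis theorem, used in the form
  "adjoining one element to a noetherian subring gives a noetherian subring", which is proved with
  the usual ideals of leading coefficients.
\<close>

section \<open>Spans and submodules over a subring\<close>

context ring
begin

inductive_set span_over :: "'a set \<Rightarrow> 'a set \<Rightarrow> 'a set" for T G where
  zero: "\<zero> \<in> span_over T G"
| gen: "t \<in> T \<Longrightarrow> g \<in> G \<Longrightarrow> t \<otimes> g \<in> span_over T G"
| add: "x \<in> span_over T G \<Longrightarrow> y \<in> span_over T G \<Longrightarrow> x \<oplus> y \<in> span_over T G"

definition submodule_over :: "'a set \<Rightarrow> 'a set \<Rightarrow> bool" where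
  "submodule_over T N \<longleftrightarrow> N \<subseteq> carrier R \<and> \<zero> \<in> N \<and>
     (\<forall>x\<in>N. \<forall>y\<in>N. x \<oplus> y \<in> N) \<and> (\<forall>t\<in>T. \<forall>x\<in>N. t \<otimes> x \<in> N)"

text \<open>The ideals of \<open>T\<close> are its \<open>T\<close>-submodules, so this says that \<open>T\<close> is a noetherian ring.\<close>

definition noetherian_subring :: "'a set \<Rightarrow> bool" where
  "noetherian_subring T \<longleftrightarrow> subring T R \<and>
     (\<forall>I. I \<subseteq> T \<and> submodule_over T I \<longrightarrow> (\<exists>F. finite F \<and> F \<subseteq> I \<and> I = span_over T F))"

end

context cring
begin

lemma submodule_overD:
  assumes "submodule_over T N"
  shows "N \<subseteq> carrier R" "\<zero> \<in> N" "x \<in> N \<Longrightarrow> y \<in> N \<Longrightarrow> x \<oplus> y \<in> N"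
    "t \<in> T \<Longrightarrow> x \<in> N \<Longrightarrow> t \<otimes> x \<in> N"
  using assms unfolding submodule_over_def by auto

lemma submodule_over_mono: "T' \<subseteq> T \<Longrightarrow> submodule_over T N \<Longrightarrow> submodule_over T' N"
  unfolding submodule_over_def by blast

lemma submodule_over_Int:
  "submodule_over T N \<Longrightarrow> submodule_over T L \<Longrightarrow> submodule_over T (N \<inter> L)"
  unfolding submodule_over_def by blast

lemma submodule_over_minus:
  assumes T: "subring T R" and N: "submodule_over T N" and x: "x \<in> N" and y: "y \<in> N"
  shows "x \<ominus> y \<in> N"
proof -
  have "\<ominus> \<one> \<otimes> y \<in> N" using submodule_overD(4)[OF N _ y] subringE(3,5)[OF T] by blast
  then have "\<ominus> y \<in> N" using y submodule_overD(1)[OF N] by (auto simp: l_minus)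
  then show ?thesis using submodule_overD(3)[OF N x] by (simp add: a_minus_def)
qed

lemma subring_submodule_over:
  assumes "subring S R" "T \<subseteq> S"
  shows "submodule_over T S"
  using subringE(1,2,6,7)[OF assms(1)] assms(2) unfolding submodule_over_def by blast

lemma span_over_carrier:
  assumes "T \<subseteq> carrier R" "G \<subseteq> carrier R"
  shows "span_over T G \<subseteq> carrier R"
proof
  fix x assume "x \<in> span_over T G" then show "x \<in> carrier R"
    by induction (use assms in auto)
qed

lemma span_over_minimal:
  assumes "submodule_over T N" "G \<subseteq> N"
  shows "span_over T G \<subseteq> N"
proof
  fix x assume "x \<in> span_over T G" then show "x \<in> N"
    by induction (use assms in \<open>auto simp: submodule_over_def\<close>)
qed

lemma span_over_mono:
  assumes "T \<subseteq> T'" "G \<subseteq> G'"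
  shows "span_over T G \<subseteq> span_over T' G'"
proof
  fix x assume "x \<in> span_over T G" then show "x \<in> span_over T' G'"
  proof induction
    case zero show ?case by (rule span_over.zero)
  next
    case (gen t g) then show ?case using assms by (blast intro: span_over.gen)
  next
    case (add x y) show ?case using add.IH by (rule span_over.add)
  qed
qed

lemma span_over_empty: "span_over T {} = {\<zero>}"
proof
  show "span_over T {} \<subseteq> {\<zero>}"
  proof
    fix x assume "x \<in> span_over T {}" then show "x \<in> {\<zero>}"
      by induction auto
  qed
qed (auto intro: span_over.zero)

lemma span_over_incl:
  assumes "subring T R" "G \<subseteq> carrier R"
  shows "G \<subseteq> span_over T G"
proof
  fix g assume g: "g \<in> G"
  then have "\<one> \<otimes> g \<in> span_over T G" using subringE(3)[OF assms(1)] by (blast intro: span_over.gen)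
  then show "g \<in> span_over T G" using g assms(2) by auto
qed

lemma span_over_mult_image:
  assumes T: "T \<subseteq> carrier R" and G: "G \<subseteq> carrier R" and c: "c \<in> carrier R"
  shows "x \<in> span_over T G \<Longrightarrow> c \<otimes> x \<in> span_over T ((\<otimes>) c ` G)"
proof (induction rule: span_over.induct)
  case zero then show ?case using c by (simp add: span_over.zero)
next
  case (gen t g)
  then have "t \<in> carrier R" "g \<in> carrier R" using T G by auto
  then have "c \<otimes> (t \<otimes> g) = t \<otimes> (c \<otimes> g)" using c by algebra
  then show ?case using gen by (auto intro: span_over.gen)
next
  case (add x y)
  then have "x \<in> carrier R" "y \<in> carrier R" using span_over_carrier[OF T G] by auto
  then have "c \<otimes> (x \<oplus> y) = c \<otimes> x \<oplus> c \<otimes> y" using c by algebra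
  then show ?case using span_over.add[OF add.IH] by simp
qed

lemma span_over_submodule:
  assumes T: "subring T R" and G: "G \<subseteq> carrier R"
  shows "submodule_over T (span_over T G)"
proof -
  have TC: "T \<subseteq> carrier R" using subringE(1)[OF T] .
  have "s \<otimes> x \<in> span_over T G" if s: "s \<in> T" and x: "x \<in> span_over T G" for s x
    using x
  proof induction
    case zero
    have "s \<in> carrier R" using s TC by blast
    then show ?case by (simp add: span_over.zero)
  next
    case (gen t g)
    then have "s \<in> carrier R" "t \<in> carrier R" "g \<in> carrier R" using s TC G by auto
    then have "s \<otimes> (t \<otimes> g) = (s \<otimes> t) \<otimes> g" by algebra
    then show ?case using gen s subringE(6)[OF T] by (auto intro: span_over.gen)
  next
    case (add x y)
    then have "s \<in> carrier R" "x \<in> carrier R" "y \<in> carrier R"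
      using s TC span_over_carrier[OF TC G] by auto
    then have "s \<otimes> (x \<oplus> y) = s \<otimes> x \<oplus> s \<otimes> y" by algebra
    then show ?case using span_over.add[OF add.IH] by simp
  qed
  then show ?thesis
    unfolding submodule_over_def using span_over_carrier[OF TC G]
    by (simp add: span_over.zero span_over.add)
qed

lemma submodule_over_line:
  assumes T: "subring T R" and L: "submodule_over T L" and g: "g \<in> carrier R"
  shows "submodule_over T {t \<otimes> g \<oplus> m | t m. t \<in> T \<and> m \<in> L}" (is "submodule_over T ?S")
  unfolding submodule_over_def
proof (intro conjI ballI subsetI)
  have TC: "T \<subseteq> carrier R" using subringE(1)[OF T] .
  show "x \<in> carrier R" if "x \<in> ?S" for x
    using that TC g submodule_overD(1)[OF L] by auto
  have "\<zero> = \<zero> \<otimes> g \<oplus> \<zero>" using g by simp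
  then show "\<zero> \<in> ?S" using subringE(2)[OF T] submodule_overD(2)[OF L] by blast
next
  fix x y assume "x \<in> ?S" "y \<in> ?S"
  then obtain t m t' m' where tm: "x = t \<otimes> g \<oplus> m" "y = t' \<otimes> g \<oplus> m'"
    "t \<in> T" "t' \<in> T" "m \<in> L" "m' \<in> L" by blast
  moreover have "t \<in> carrier R" "t' \<in> carrier R" "m \<in> carrier R" "m' \<in> carrier R"
    using tm subringE(1)[OF T] submodule_overD(1)[OF L] by auto
  ultimately have "x \<oplus> y = (t \<oplus> t') \<otimes> g \<oplus> (m \<oplus> m')" using g by algebra
  then show "x \<oplus> y \<in> ?S" using tm subringE(7)[OF T] submodule_overD(3)[OF L] by blast
next
  fix s x assume "s \<in> T" "x \<in> ?S"
  then obtain t m where tm: "x = t \<otimes> g \<oplus> m" "s \<in> T" "t \<in> T" "m \<in> L" by blast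
  moreover have "s \<in> carrier R" "t \<in> carrier R" "m \<in> carrier R"
    using tm subringE(1)[OF T] submodule_overD(1)[OF L] by auto
  ultimately have "s \<otimes> x = (s \<otimes> t) \<otimes> g \<oplus> s \<otimes> m" using g by algebra
  then show "s \<otimes> x \<in> ?S" using tm subringE(6)[OF T] submodule_overD(4)[OF L] by blast
qed

lemma span_over_insert:
  assumes T: "subring T R" and G: "G \<subseteq> carrier R" and g: "g \<in> carrier R"
  shows "span_over T (insert g G) = {t \<otimes> g \<oplus> m | t m. t \<in> T \<and> m \<in> span_over T G}"
    (is "_ = ?S")
proof
  note SG = span_over_submodule[OF T G]
  have "insert g G \<subseteq> ?S"
  proof -
    have "g = \<one> \<otimes> g \<oplus> \<zero>" using g by simp
    moreover have "h = \<zero> \<otimes> g \<oplus> h" if "h \<in> G" for h using that G g by auto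
    ultimately show ?thesis
      using subringE(2,3)[OF T] span_over_incl[OF T G] submodule_overD(2)[OF SG] by blast
  qed
  then show "span_over T (insert g G) \<subseteq> ?S"
    by (rule span_over_minimal[OF submodule_over_line[OF T SG g]])
  show "?S \<subseteq> span_over T (insert g G)"
  proof
    fix x assume "x \<in> ?S"
    then obtain t m where tm: "x = t \<otimes> g \<oplus> m" "t \<in> T" "m \<in> span_over T G" by blast
    then have "t \<otimes> g \<in> span_over T (insert g G)" by (blast intro: span_over.gen)
    moreover have "m \<in> span_over T (insert g G)" using tm span_over_mono[of T T G "insert g G"] by blast
    ultimately show "x \<in> span_over T (insert g G)" unfolding tm(1) by (rule span_over.add)
  qed
qed

lemma span_over_finite_support:
  "x \<in> span_over T G \<Longrightarrow> \<exists>F G'. finite F \<and> F \<subseteq> T \<and> finite G' \<and> G' \<subseteq> G \<and> x \<in> span_over F G'"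
proof (induction rule: span_over.induct)
  case zero then show ?case by (auto intro: span_over.zero)
next
  case (gen t g) then show ?case by (intro exI[of _ "{t}"] exI[of _ "{g}"]) (auto intro: span_over.gen)
next
  case (add x y)
  then obtain F1 G1 F2 G2 where fin: "finite F1" "F1 \<subseteq> T" "finite G1" "G1 \<subseteq> G"
    "finite F2" "F2 \<subseteq> T" "finite G2" "G2 \<subseteq> G"
    and "x \<in> span_over F1 G1" "y \<in> span_over F2 G2" by blast
  then have "x \<in> span_over (F1 \<union> F2) (G1 \<union> G2)" "y \<in> span_over (F1 \<union> F2) (G1 \<union> G2)"
    using span_over_mono[of F1 "F1 \<union> F2" G1 "G1 \<union> G2"] span_over_mono[of F2 "F1 \<union> F2" G2 "G1 \<union> G2"]
    by blast+
  then have "x \<oplus> y \<in> span_over (F1 \<union> F2) (G1 \<union> G2)" by (rule span_over.add)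
  moreover have "finite (F1 \<union> F2)" "F1 \<union> F2 \<subseteq> T" "finite (G1 \<union> G2)" "G1 \<union> G2 \<subseteq> G"
    using fin by auto
  ultimately show ?case by (intro exI[of _ "F1 \<union> F2"] exI[of _ "G1 \<union> G2"] conjI)
qed

lemma span_over_finite_coefficients:
  assumes Q: "finite Q" "Q \<subseteq> span_over B G"
  obtains F where "finite F" "F \<subseteq> B" "Q \<subseteq> span_over F G"
proof -
  have "\<forall>q\<in>Q. \<exists>F. finite F \<and> F \<subseteq> B \<and> q \<in> span_over F G"
  proof
    fix q assume "q \<in> Q"
    then have "q \<in> span_over B G" using Q(2) by blast
    from span_over_finite_support[OF this]
    obtain F G' where "finite F" "F \<subseteq> B" "G' \<subseteq> G" "q \<in> span_over F G'" by blast
    then show "\<exists>F. finite F \<and> F \<subseteq> B \<and> q \<in> span_over F G"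
      using span_over_mono[of F F G' G] by blast
  qed
  then obtain Fq where Fq: "\<forall>q\<in>Q. finite (Fq q) \<and> Fq q \<subseteq> B \<and> q \<in> span_over (Fq q) G"
    by (rule bchoice[THEN exE])
  show ?thesis
  proof (rule that[of "\<Union>q\<in>Q. Fq q"])
    show "finite (\<Union>q\<in>Q. Fq q)" "(\<Union>q\<in>Q. Fq q) \<subseteq> B" using Q(1) Fq by auto
    show "Q \<subseteq> span_over (\<Union>q\<in>Q. Fq q) G"
      using Fq span_over_mono[of _ "\<Union>q\<in>Q. Fq q" G G] by blast
  qed
qed

lemma span_over_mult_closed:
  assumes T: "subring T R" and G: "G \<subseteq> carrier R"
    and GG: "\<And>g h. g \<in> G \<Longrightarrow> h \<in> G \<Longrightarrow> g \<otimes> h \<in> span_over T G"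
    and x: "x \<in> span_over T G" and y: "y \<in> span_over T G"
  shows "x \<otimes> y \<in> span_over T G"
proof -
  have TC: "T \<subseteq> carrier R" using subringE(1)[OF T] .
  note SG = span_over_submodule[OF T G]
  have yC: "y \<in> carrier R" using y span_over_carrier[OF TC G] by blast
  show ?thesis using x
  proof induction
    case zero then show ?case using yC by (simp add: span_over.zero)
  next
    case (gen t g)
    have "g \<otimes> y \<in> span_over T ((\<otimes>) g ` G)" using span_over_mult_image[OF TC G _ y] gen G by auto
    also have "\<dots> \<subseteq> span_over T G" using GG gen by (intro span_over_minimal[OF SG]) auto
    finally have "t \<otimes> (g \<otimes> y) \<in> span_over T G" using submodule_overD(4)[OF SG] gen by blast
    moreover have "t \<in> carrier R" "g \<in> carrier R" using gen TC G by auto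
    ultimately show ?case using yC by (simp add: m_assoc)
  next
    case (add x1 x2)
    then have "x1 \<in> carrier R" "x2 \<in> carrier R" using span_over_carrier[OF TC G] by auto
    then have "(x1 \<oplus> x2) \<otimes> y = x1 \<otimes> y \<oplus> x2 \<otimes> y" using yC by algebra
    then show ?case using span_over.add[OF add.IH] by simp
  qed
qed

lemma span_over_subring:
  assumes T: "subring T R" and G: "G \<subseteq> carrier R" and one: "\<one> \<in> span_over T G"
    and GG: "\<And>g h. g \<in> G \<Longrightarrow> h \<in> G \<Longrightarrow> g \<otimes> h \<in> span_over T G"
  shows "subring (span_over T G) R"
proof (rule subringI)
  note S = span_over_submodule[OF T G]
  show "span_over T G \<subseteq> carrier R" using submodule_overD(1)[OF S] .
  show "\<one> \<in> span_over T G" by (rule one)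
  show "\<ominus> x \<in> span_over T G" if x: "x \<in> span_over T G" for x
  proof -
    have "x \<in> carrier R" using x submodule_overD(1)[OF S] by blast
    then have "\<zero> \<ominus> x = \<ominus> x" by (simp add: a_minus_def)
    then show ?thesis using submodule_over_minus[OF T S submodule_overD(2)[OF S] x] by simp
  qed
  show "x \<otimes> y \<in> span_over T G" if "x \<in> span_over T G" "y \<in> span_over T G" for x y
    using span_over_mult_closed[OF T G GG that] .
  show "x \<oplus> y \<in> span_over T G" if "x \<in> span_over T G" "y \<in> span_over T G" for x y
    using span_over.add[OF that] .
qed

lemma span_over_finsum:
  assumes T: "subring T R" and G: "finite G" "G \<subseteq> carrier R" and x: "x \<in> span_over T G"
  shows "\<exists>a \<in> G \<rightarrow> T. x = finsum R (\<lambda>g. a g \<otimes> g) G"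
proof -
  have TC: "T \<subseteq> carrier R" using subringE(1)[OF T] .
  show ?thesis using x
  proof induction
    case zero
    have "finsum R (\<lambda>g. \<zero> \<otimes> g) G = finsum R (\<lambda>_. \<zero>) G"
      by (rule finsum_cong') (use G in auto)
    then show ?case using subringE(2)[OF T] by (intro bexI[of _ "\<lambda>_. \<zero>"]) auto
  next
    case (gen t g)
    have tC: "t \<in> carrier R" using gen TC by blast
    have "finsum R (\<lambda>h. (if h = g then t else \<zero>) \<otimes> h) G
        = finsum R (\<lambda>h. if g = h then t \<otimes> h else \<zero>) G"
      by (rule finsum_cong') (use G tC in auto)
    also have "\<dots> = t \<otimes> g" by (rule finsum_singleton) (use G tC gen in auto)
    finally show ?case
      using gen subringE(2)[OF T] by (intro bexI[of _ "\<lambda>h. if h = g then t else \<zero>"]) auto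
  next
    case (add x y)
    then obtain a b where ab: "a \<in> G \<rightarrow> T" "x = finsum R (\<lambda>g. a g \<otimes> g) G"
      "b \<in> G \<rightarrow> T" "y = finsum R (\<lambda>g. b g \<otimes> g) G" by blast
    then have abC: "a g \<in> carrier R" "b g \<in> carrier R" if "g \<in> G" for g using that TC by auto
    have "finsum R (\<lambda>g. (a g \<oplus> b g) \<otimes> g) G = finsum R (\<lambda>g. a g \<otimes> g \<oplus> b g \<otimes> g) G"
      by (rule finsum_cong') (use G abC in \<open>auto simp: l_distr\<close>)
    also have "\<dots> = x \<oplus> y"
      unfolding ab by (rule finsum_addf) (use G abC in auto)
    finally show ?case using ab subringE(7)[OF T] by (intro bexI[of _ "\<lambda>g. a g \<oplus> b g"]) auto
  qed
qed

lemma coefficient_submodule: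
  assumes T: "subring T R" and L: "submodule_over T L" and N: "submodule_over T N"
    and g: "g \<in> carrier R"
  shows "submodule_over T {t \<in> T. \<exists>m\<in>L. t \<otimes> g \<oplus> m \<in> N}" (is "submodule_over T ?J")
  unfolding submodule_over_def
proof (intro conjI ballI subsetI)
  show "x \<in> carrier R" if "x \<in> ?J" for x
    using that subringE(1)[OF T] by blast
  have "\<zero> \<otimes> g \<oplus> \<zero> \<in> N" using g submodule_overD(2)[OF N] by simp
  then show "\<zero> \<in> ?J" using subringE(2)[OF T] submodule_overD(2)[OF L] by blast
next
  fix x y assume "x \<in> ?J" "y \<in> ?J"
  then obtain m m' where m: "x \<in> T" "y \<in> T" "m \<in> L" "m' \<in> L"
    "x \<otimes> g \<oplus> m \<in> N" "y \<otimes> g \<oplus> m' \<in> N" by blast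
  have "x \<in> carrier R" "y \<in> carrier R" "m \<in> carrier R" "m' \<in> carrier R"
    using m subringE(1)[OF T] submodule_overD(1)[OF L] by auto
  then have "(x \<otimes> g \<oplus> m) \<oplus> (y \<otimes> g \<oplus> m') = (x \<oplus> y) \<otimes> g \<oplus> (m \<oplus> m')" using g by algebra
  then have "(x \<oplus> y) \<otimes> g \<oplus> (m \<oplus> m') \<in> N" using submodule_overD(3)[OF N m(5,6)] by simp
  moreover have "x \<oplus> y \<in> T" "m \<oplus> m' \<in> L" using subringE(7)[OF T] submodule_overD(3)[OF L] m by auto
  ultimately show "x \<oplus> y \<in> ?J" by blast
next
  fix s x assume s: "s \<in> T" and "x \<in> ?J"
  then obtain m where m: "x \<in> T" "m \<in> L" "x \<otimes> g \<oplus> m \<in> N" by blast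
  have "s \<in> carrier R" "x \<in> carrier R" "m \<in> carrier R"
    using s m subringE(1)[OF T] submodule_overD(1)[OF L] by auto
  then have "s \<otimes> (x \<otimes> g \<oplus> m) = (s \<otimes> x) \<otimes> g \<oplus> s \<otimes> m" using g by algebra
  then have "(s \<otimes> x) \<otimes> g \<oplus> s \<otimes> m \<in> N" using submodule_overD(4)[OF N s m(3)] by simp
  moreover have "s \<otimes> x \<in> T" "s \<otimes> m \<in> L" using subringE(6)[OF T] submodule_overD(4)[OF L] s m by auto
  ultimately show "s \<otimes> x \<in> ?J" by blast
qed

lemma span_over_lift:
  assumes T: "subring T R" and L: "submodule_over T L" and g: "g \<in> carrier R" and E: "E \<subseteq> T"
    and w: "\<And>e. e \<in> E \<Longrightarrow> \<exists>m\<in>L. w e = e \<otimes> g \<oplus> m"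
    and t: "t \<in> span_over T E"
  shows "\<exists>m\<in>L. t \<otimes> g \<oplus> m \<in> span_over T (w ` E)"
proof -
  have TC: "T \<subseteq> carrier R" using subringE(1)[OF T] .
  note LC = submodule_overD(1)[OF L]
  show ?thesis using t
  proof induction
    case zero
    have "\<zero> \<otimes> g \<oplus> \<zero> \<in> span_over T (w ` E)" using g by (simp add: span_over.zero)
    then show ?case using submodule_overD(2)[OF L] by blast
  next
    case (gen s e)
    then obtain m where m: "m \<in> L" "w e = e \<otimes> g \<oplus> m" using w by blast
    have "s \<in> carrier R" "e \<in> carrier R" "m \<in> carrier R" using gen E TC m LC by auto
    then have "s \<otimes> w e = (s \<otimes> e) \<otimes> g \<oplus> s \<otimes> m" unfolding m(2) using g by algebra
    moreover have "s \<otimes> w e \<in> span_over T (w ` E)" using gen by (blast intro: span_over.gen)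
    moreover have "s \<otimes> m \<in> L" using submodule_overD(4)[OF L gen(1) m(1)] .
    ultimately show ?case by auto
  next
    case (add x y)
    then obtain m m' where m: "m \<in> L" "x \<otimes> g \<oplus> m \<in> span_over T (w ` E)"
      "m' \<in> L" "y \<otimes> g \<oplus> m' \<in> span_over T (w ` E)" by blast
    have "x \<in> carrier R" "y \<in> carrier R" "m \<in> carrier R" "m' \<in> carrier R"
      using add span_over_carrier[OF TC] E TC m LC by blast+
    then have "(x \<otimes> g \<oplus> m) \<oplus> (y \<otimes> g \<oplus> m') = (x \<oplus> y) \<otimes> g \<oplus> (m \<oplus> m')" using g by algebra
    moreover have "(x \<otimes> g \<oplus> m) \<oplus> (y \<otimes> g \<oplus> m') \<in> span_over T (w ` E)"
      using m by (blast intro: span_over.add)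
    moreover have "m \<oplus> m' \<in> L" using submodule_overD(3)[OF L m(1,3)] .
    ultimately show ?case by auto
  qed
qed

lemma choose_lifts:
  assumes "\<And>e. e \<in> E \<Longrightarrow> \<exists>m\<in>L. e \<otimes> g \<oplus> m \<in> N"
  obtains w where "\<And>e. e \<in> E \<Longrightarrow> w e \<in> N \<and> (\<exists>m\<in>L. w e = e \<otimes> g \<oplus> m)"
proof -
  have "\<forall>e\<in>E. \<exists>m. m \<in> L \<and> e \<otimes> g \<oplus> m \<in> N" using assms by blast
  then obtain m where "\<forall>e\<in>E. m e \<in> L \<and> e \<otimes> g \<oplus> m e \<in> N" by (rule bchoice[THEN exE])
  then show ?thesis by (intro that[of "\<lambda>e. e \<otimes> g \<oplus> m e"]) blast
qed

lemma submodule_over_eq_span_over: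
  assumes T: "subring T R" and N: "submodule_over T N"
    and K: "K \<subseteq> N" "N \<inter> L \<subseteq> span_over T K" and W: "W \<subseteq> N"
    and reduce: "\<And>x. x \<in> N \<Longrightarrow> \<exists>z\<in>span_over T W. x \<ominus> z \<in> L"
  shows "N = span_over T (K \<union> W)"
proof
  show "span_over T (K \<union> W) \<subseteq> N" using span_over_minimal[OF N] K W by blast
  show "N \<subseteq> span_over T (K \<union> W)"
  proof
    fix x assume x: "x \<in> N"
    then obtain z where z: "z \<in> span_over T W" "x \<ominus> z \<in> L" using reduce by blast
    have zN: "z \<in> N" using z span_over_minimal[OF N W] by blast
    then have "x \<ominus> z \<in> N \<inter> L" using submodule_over_minus[OF T N x] z by blast
    then have "x \<ominus> z \<in> span_over T (K \<union> W)" using K span_over_mono[of T T K "K \<union> W"] by blast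
    moreover have "z \<in> span_over T (K \<union> W)" using z span_over_mono[of T T W "K \<union> W"] by blast
    ultimately have sum: "(x \<ominus> z) \<oplus> z \<in> span_over T (K \<union> W)" by (rule span_over.add)
    have "x \<in> carrier R" "z \<in> carrier R" using x zN submodule_overD(1)[OF N] by auto
    then have "(x \<ominus> z) \<oplus> z = x" by algebra
    then show "x \<in> span_over T (K \<union> W)" using sum by simp
  qed
qed

section \<open>Noetherian subrings\<close>

lemma noetherian_subringD:
  assumes "noetherian_subring T"
  shows "subring T R" "I \<subseteq> T \<Longrightarrow> submodule_over T I \<Longrightarrow> \<exists>F. finite F \<and> F \<subseteq> I \<and> I = span_over T F"
  using assms unfolding noetherian_subring_def by blast+

lemma noetherian_subringI_inverses:
  assumes K: "subring K R" and inv: "\<And>k. k \<in> K \<Longrightarrow> k \<noteq> \<zero> \<Longrightarrow> \<exists>k'\<in>K. k' \<otimes> k = \<one>"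
  shows "noetherian_subring K"
  unfolding noetherian_subring_def
proof (intro conjI allI impI K)
  fix I assume "I \<subseteq> K \<and> submodule_over K I"
  then have IK: "I \<subseteq> K" and I: "submodule_over K I" by auto
  show "\<exists>F. finite F \<and> F \<subseteq> I \<and> I = span_over K F"
  proof (cases "I \<subseteq> {\<zero>}")
    case True
    then have "I = span_over K {}" using submodule_overD(2)[OF I] by (auto simp: span_over_empty)
    then show ?thesis by (intro exI[of _ "{}"]) simp
  next
    case False
    then obtain k where k: "k \<in> I" "k \<noteq> \<zero>" by blast
    then obtain k' where k': "k' \<in> K" "k' \<otimes> k = \<one>" using IK inv by blast
    then have one: "\<one> \<in> I" using submodule_overD(4)[OF I k'(1) k(1)] by simp
    have "I = span_over K {\<one>}"
    proof
      show "span_over K {\<one>} \<subseteq> I" using span_over_minimal[OF I] one by simp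
      show "I \<subseteq> span_over K {\<one>}"
      proof
        fix x assume "x \<in> I"
        then have "x \<in> K" "x \<in> carrier R" using IK subringE(1)[OF K] by auto
        then show "x \<in> span_over K {\<one>}" using span_over.gen[of x K \<one> "{\<one>}"] by simp
      qed
    qed
    then show ?thesis using one by (intro exI[of _ "{\<one>}"]) simp
  qed
qed

lemma span_over_insert_reduction:
  assumes T: "subring T R" and G: "G \<subseteq> carrier R" and g: "g \<in> carrier R"
    and E: "E \<subseteq> T"
    and lc: "\<And>t m. t \<in> T \<Longrightarrow> m \<in> span_over T G \<Longrightarrow> t \<otimes> g \<oplus> m \<in> N \<Longrightarrow> t \<in> span_over T E"
    and w: "\<And>e. e \<in> E \<Longrightarrow> \<exists>m\<in>span_over T G. w e = e \<otimes> g \<oplus> m"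
    and x: "x \<in> N" "x \<in> span_over T (insert g G)"
  shows "\<exists>z\<in>span_over T (w ` E). x \<ominus> z \<in> span_over T G"
proof -
  note L = span_over_submodule[OF T G]
  obtain t m where tm: "x = t \<otimes> g \<oplus> m" "t \<in> T" "m \<in> span_over T G"
    using x(2) span_over_insert[OF T G g] by blast
  then have "t \<in> span_over T E" using lc x(1) by blast
  then obtain m' where m': "m' \<in> span_over T G" "t \<otimes> g \<oplus> m' \<in> span_over T (w ` E)"
    using span_over_lift[OF T L g E w] by blast
  have "t \<in> carrier R" "m \<in> carrier R" "m' \<in> carrier R"
    using tm m' subringE(1)[OF T] submodule_overD(1)[OF L] by auto
  then have "x \<ominus> (t \<otimes> g \<oplus> m') = m \<ominus> m'" unfolding tm(1) using g by algebra
  then have "x \<ominus> (t \<otimes> g \<oplus> m') \<in> span_over T G" using submodule_over_minus[OF T L tm(3) m'(1)] by simp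
  then show ?thesis using m'(2) by blast
qed

lemma noetherian_submodule_finitely_generated:
  assumes T: "noetherian_subring T" and G: "finite G" "G \<subseteq> carrier R"
    and N: "submodule_over T N" "N \<subseteq> span_over T G"
  shows "\<exists>H. finite H \<and> H \<subseteq> N \<and> N = span_over T H"
  using G N
proof (induction G arbitrary: N rule: finite_induct)
  case empty
  then have "N = span_over T {}" using submodule_overD(2)[of T N] by (auto simp: span_over_empty)
  then show ?case by blast
next
  case (insert g G)
  have Tsub: "subring T R" using noetherian_subringD(1)[OF T] .
  have GC: "G \<subseteq> carrier R" and gC: "g \<in> carrier R" using insert.prems(1) by auto
  define L where "L = span_over T G"
  have L: "submodule_over T L" unfolding L_def using span_over_submodule[OF Tsub GC] .
  define J where "J = {t \<in> T. \<exists>m\<in>L. t \<otimes> g \<oplus> m \<in> N}"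
  have "submodule_over T J" "J \<subseteq> T"
    unfolding J_def using coefficient_submodule[OF Tsub L insert.prems(2) gC] by auto
  then obtain E where E: "finite E" "E \<subseteq> J" "J = span_over T E"
    using noetherian_subringD(2)[OF T] by metis
  then have ET: "E \<subseteq> T" and liftE: "\<And>e. e \<in> E \<Longrightarrow> \<exists>m\<in>L. e \<otimes> g \<oplus> m \<in> N"
    unfolding J_def by blast+
  obtain w where w: "\<And>e. e \<in> E \<Longrightarrow> w e \<in> N \<and> (\<exists>m\<in>L. w e = e \<otimes> g \<oplus> m)"
    using choose_lifts[OF liftE] by blast
  have "submodule_over T (N \<inter> L)" using submodule_over_Int[OF insert.prems(2) L] .
  moreover have "N \<inter> L \<subseteq> span_over T G" unfolding L_def by blast
  ultimately have "\<exists>K. finite K \<and> K \<subseteq> N \<inter> L \<and> N \<inter> L = span_over T K"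
    by (rule insert.IH[OF GC])
  then obtain K where K: "finite K" "K \<subseteq> N \<inter> L" "N \<inter> L = span_over T K" by metis
  have "N = span_over T (K \<union> w ` E)"
  proof (rule submodule_over_eq_span_over[OF Tsub insert.prems(2)])
    show "K \<subseteq> N" "N \<inter> L \<subseteq> span_over T K" "w ` E \<subseteq> N" using K w by auto
    show "\<exists>z\<in>span_over T (w ` E). x \<ominus> z \<in> L" if "x \<in> N" for x
      using that insert.prems(3) E(3) w unfolding J_def L_def
      by (intro span_over_insert_reduction[OF Tsub GC gC ET]) auto
  qed
  moreover have "finite (K \<union> w ` E)" "K \<union> w ` E \<subseteq> N" using K(1,2) w E(1) by auto
  ultimately show ?case by (intro exI[of _ "K \<union> w ` E"] conjI)
qed

lemma noetherian_subring_ascending_chain: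
  assumes T: "noetherian_subring T" and C: "\<And>n. submodule_over T (C n)" "\<And>n. C n \<subseteq> T"
    and inc: "\<And>n. C n \<subseteq> C (Suc n)"
  shows "\<exists>N. \<forall>n\<ge>N. C n = C N"
proof -
  have Cmono: "C m \<subseteq> C n" if "m \<le> n" for m n using lift_Suc_mono_le[of C, OF inc that] .
  define U where "U = (\<Union>n. C n)"
  have "submodule_over T U"
    unfolding submodule_over_def
  proof (intro conjI ballI)
    have "T \<subseteq> carrier R" using subringE(1)[OF noetherian_subringD(1)[OF T]] .
    then show "U \<subseteq> carrier R" using C(2) unfolding U_def by blast
    show "\<zero> \<in> U" using submodule_overD(2)[OF C(1)] unfolding U_def by blast
  next
    fix x y assume "x \<in> U" "y \<in> U"
    then obtain m n where "x \<in> C m" "y \<in> C n" unfolding U_def by blast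
    then have "x \<in> C (max m n)" "y \<in> C (max m n)" using Cmono[of m "max m n"] Cmono[of n "max m n"] by auto
    then show "x \<oplus> y \<in> U" using submodule_overD(3)[OF C(1)] unfolding U_def by blast
  next
    fix s x assume "s \<in> T" "x \<in> U"
    then show "s \<otimes> x \<in> U" using submodule_overD(4)[OF C(1)] unfolding U_def by blast
  qed
  moreover have "U \<subseteq> T" using C(2) unfolding U_def by blast
  ultimately obtain E where E: "finite E" "E \<subseteq> U" "U = span_over T E"
    using noetherian_subringD(2)[OF T] by metis
  then have "\<forall>e\<in>E. \<exists>n. e \<in> C n" unfolding U_def by blast
  then obtain k where k: "\<forall>e\<in>E. e \<in> C (k e)" by (rule bchoice[THEN exE])
  define N where "N = Max (insert 0 (k ` E))"
  have "E \<subseteq> C N"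
  proof
    fix e assume "e \<in> E"
    then have "k e \<le> N" unfolding N_def using E(1) by (intro Max_ge) auto
    then show "e \<in> C N" using k Cmono \<open>e \<in> E\<close> by blast
  qed
  then have "U \<subseteq> C N" using span_over_minimal[OF C(1)] E(3) by simp
  then have "C n = C N" if "n \<ge> N" for n using that Cmono unfolding U_def by blast
  then show ?thesis by blast
qed

end

section \<open>Adjoining an element: the Hilbert basis theorem\<close>

text \<open>\<open>adjoin T a\<close> is \<open>T[a]\<close>; \<open>adjoin_below T a n\<close> consists of the values at \<open>a\<close> of the
  polynomials over \<open>T\<close> of degree less than \<open>n\<close>.\<close>

context ring
begin

definition adjoin :: "'a set \<Rightarrow> 'a \<Rightarrow> 'a set" where
  "adjoin T a = span_over T (range (\<lambda>i::nat. a [^] i))"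

definition adjoin_below :: "'a set \<Rightarrow> 'a \<Rightarrow> nat \<Rightarrow> 'a set" where
  "adjoin_below T a n = span_over T ((\<lambda>i. a [^] i) ` {..<n})"

end

context cring
begin

lemma adjoin_below_Suc:
  assumes "subring T R" "a \<in> carrier R"
  shows "adjoin_below T a (Suc n) = {t \<otimes> a [^] n \<oplus> y | t y. t \<in> T \<and> y \<in> adjoin_below T a n}"
  unfolding adjoin_below_def lessThan_Suc image_insert
  using assms by (intro span_over_insert) auto

lemma adjoin_below_mono: "m \<le> n \<Longrightarrow> adjoin_below T a m \<subseteq> adjoin_below T a n"
  unfolding adjoin_below_def by (intro span_over_mono) auto

lemma adjoin_below_submodule:
  "subring T R \<Longrightarrow> a \<in> carrier R \<Longrightarrow> submodule_over T (adjoin_below T a n)"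
  unfolding adjoin_below_def by (intro span_over_submodule) auto

lemma nat_pow_mult_adjoin_below:
  assumes T: "subring T R" and a: "a \<in> carrier R" and y: "y \<in> adjoin_below T a n"
  shows "a [^] k \<otimes> y \<in> adjoin_below T a (k + n)"
proof -
  have "a [^] k \<otimes> y \<in> span_over T ((\<otimes>) (a [^] k) ` (\<lambda>i. a [^] i) ` {..<n})"
    using y subringE(1)[OF T] a unfolding adjoin_below_def by (intro span_over_mult_image) auto
  moreover have "(\<otimes>) (a [^] k) ` (\<lambda>i. a [^] i) ` {..<n} \<subseteq> (\<lambda>i. a [^] i) ` {..<k + n}"
    using a by (auto simp: nat_pow_mult)
  ultimately show ?thesis unfolding adjoin_below_def using span_over_mono by blast
qed

lemma adjoin_eq_Union_adjoin_below: "adjoin T a = (\<Union>n. adjoin_below T a n)"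
proof
  show "(\<Union>n. adjoin_below T a n) \<subseteq> adjoin T a"
    unfolding adjoin_below_def adjoin_def by (intro UN_least span_over_mono) auto
  show "adjoin T a \<subseteq> (\<Union>n. adjoin_below T a n)"
  proof
    fix x assume "x \<in> adjoin T a"
    then have "\<exists>F G. finite F \<and> F \<subseteq> T \<and> finite G \<and> G \<subseteq> range (\<lambda>i::nat. a [^] i)
        \<and> x \<in> span_over F G"
      unfolding adjoin_def by (rule span_over_finite_support)
    then obtain F G where FG: "finite F" "F \<subseteq> T" "finite G" "G \<subseteq> range (\<lambda>i::nat. a [^] i)"
      "x \<in> span_over F G" by metis
    obtain D :: "nat set" where D: "finite D" "G = (\<lambda>i. a [^] i) ` D"
      using finite_subset_image[OF FG(3,4)] by blast
    then obtain n where "D \<subseteq> {..<n}" by (auto simp: finite_nat_set_iff_bounded)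
    then have "span_over F G \<subseteq> adjoin_below T a n"
      unfolding adjoin_below_def D(2) using FG(2) by (intro span_over_mono) auto
    then show "x \<in> (\<Union>n. adjoin_below T a n)" using FG(5) by blast
  qed
qed

lemma nat_pow_in_adjoin:
  assumes "subring T R" "a \<in> carrier R"
  shows "a [^] (i::nat) \<in> adjoin T a"
  using span_over_incl[OF assms(1), of "range (\<lambda>i::nat. a [^] i)"] assms(2)
  unfolding adjoin_def by auto

lemma adjoin_subring:
  assumes T: "subring T R" and a: "a \<in> carrier R"
  shows "subring (adjoin T a) R"
  unfolding adjoin_def
proof (rule span_over_subring[OF T])
  show G: "range (\<lambda>i::nat. a [^] i) \<subseteq> carrier R" using a by auto
  show "\<one> \<in> span_over T (range (\<lambda>i::nat. a [^] i))"
    using nat_pow_in_adjoin[OF T a, of 0] unfolding adjoin_def by simp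
  show "g \<otimes> h \<in> span_over T (range (\<lambda>i::nat. a [^] i))"
    if "g \<in> range (\<lambda>i::nat. a [^] i)" "h \<in> range (\<lambda>i::nat. a [^] i)" for g h
  proof -
    have "g \<otimes> h \<in> range (\<lambda>i::nat. a [^] i)" using that a by (auto simp: nat_pow_mult)
    then show ?thesis using span_over_incl[OF T G] by blast
  qed
qed

lemma subset_adjoin:
  assumes T: "subring T R" and a: "a \<in> carrier R"
  shows "T \<subseteq> adjoin T a" "a \<in> adjoin T a"
proof -
  show "a \<in> adjoin T a" using nat_pow_in_adjoin[OF T a, of 1] a by simp
  show "T \<subseteq> adjoin T a"
  proof
    fix t assume t: "t \<in> T"
    then have "t \<otimes> a [^] (0::nat) \<in> adjoin T a" unfolding adjoin_def by (blast intro: span_over.gen)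
    moreover have "t \<in> carrier R" using t subringE(1)[OF T] by blast
    ultimately show "t \<in> adjoin T a" by simp
  qed
qed

lemma adjoin_minimal:
  assumes S: "subring S R" "T \<subseteq> S" "a \<in> S"
  shows "adjoin T a \<subseteq> S"
proof -
  have "a [^] i \<in> S" for i :: nat
    by (induction i) (use subringE(3,6)[OF S(1)] S(3) in auto)
  then show ?thesis
    unfolding adjoin_def using subring_submodule_over[OF S(1,2)] by (intro span_over_minimal) auto
qed

lemma generate_ring_insert:
  assumes H: "H \<subseteq> carrier R" and a: "a \<in> carrier R"
  shows "generate_ring R (insert a H) = adjoin (generate_ring R H) a"
proof (rule sym, rule generate_ringI)
  have G: "subring (generate_ring R H) R" using generate_ring_is_subring[OF H] .
  show "insert a H \<subseteq> carrier R" using H a by blast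
  show "subring (adjoin (generate_ring R H) a) R" using adjoin_subring[OF G a] .
  show "insert a H \<subseteq> adjoin (generate_ring R H) a"
    using subset_adjoin[OF G a] generate_ring.incl[of _ H R] by blast
  show "adjoin (generate_ring R H) a \<subseteq> S" if "subring S R" "insert a H \<subseteq> S" for S
    using that generate_ring_min_subring1[OF H that(1)] by (intro adjoin_minimal) auto
qed

lemma leading_coefficient_Suc:
  assumes T: "subring T R" and a: "a \<in> carrier R" and I: "submodule_over (adjoin T a) I"
    and t: "t \<in> T" and y: "y \<in> adjoin_below T a n" and ty: "t \<otimes> a [^] n \<oplus> y \<in> I"
  shows "\<exists>y'\<in>adjoin_below T a (Suc n). t \<otimes> a [^] Suc n \<oplus> y' \<in> I"
proof -
  have aI: "a \<otimes> (t \<otimes> a [^] n \<oplus> y) \<in> I"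
    using submodule_overD(4)[OF I _ ty] subset_adjoin(2)[OF T a] by blast
  have "t \<in> carrier R" "y \<in> carrier R" "a [^] n \<in> carrier R"
    using t y a subringE(1)[OF T] submodule_overD(1)[OF adjoin_below_submodule[OF T a]] by auto
  then have "a \<otimes> (t \<otimes> a [^] n \<oplus> y) = t \<otimes> (a [^] n \<otimes> a) \<oplus> a \<otimes> y"
    using a by algebra
  then have "a \<otimes> (t \<otimes> a [^] n \<oplus> y) = t \<otimes> a [^] Suc n \<oplus> a [^] (1::nat) \<otimes> y"
    using a by simp
  moreover have "a [^] (1::nat) \<otimes> y \<in> adjoin_below T a (Suc n)"
    using nat_pow_mult_adjoin_below[OF T a y, of 1] by simp
  ultimately show ?thesis using aI by auto
qed

text \<open>The ideals of leading coefficients \<open>{t | t a\<^sup>n + (lower terms) \<in> I}\<close> increase with \<open>n\<close>; they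
  are all contained in the one for \<open>n = N\<close> from some \<open>N\<close> on, and \<open>E\<close> generates that one.\<close>

lemma leading_coefficients_stabilize:
  assumes T: "noetherian_subring T" and a: "a \<in> carrier R" and I: "submodule_over (adjoin T a) I"
  obtains N E where "finite E" "E \<subseteq> T"
    "\<And>e. e \<in> E \<Longrightarrow> \<exists>y\<in>adjoin_below T a N. e \<otimes> a [^] N \<oplus> y \<in> I"
    "\<And>k t y. N \<le> k \<Longrightarrow> t \<in> T \<Longrightarrow> y \<in> adjoin_below T a k \<Longrightarrow> t \<otimes> a [^] k \<oplus> y \<in> I
      \<Longrightarrow> t \<in> span_over T E"
proof -
  have Tsub: "subring T R" using noetherian_subringD(1)[OF T] .
  define Lc where "Lc n = {t \<in> T. \<exists>y\<in>adjoin_below T a n. t \<otimes> a [^] n \<oplus> y \<in> I}" for n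
  have IT: "submodule_over T I" using submodule_over_mono[OF subset_adjoin(1)[OF Tsub a] I] .
  have Lc: "submodule_over T (Lc n)" "Lc n \<subseteq> T" for n
  proof -
    have "a [^] n \<in> carrier R" using a by simp
    then show "submodule_over T (Lc n)"
      unfolding Lc_def by (rule coefficient_submodule[OF Tsub adjoin_below_submodule[OF Tsub a] IT])
    show "Lc n \<subseteq> T" unfolding Lc_def by blast
  qed
  have "Lc n \<subseteq> Lc (Suc n)" for n
  proof
    fix t assume "t \<in> Lc n"
    then obtain y where ty: "t \<in> T" "y \<in> adjoin_below T a n" "t \<otimes> a [^] n \<oplus> y \<in> I"
      unfolding Lc_def by blast
    show "t \<in> Lc (Suc n)"
      using leading_coefficient_Suc[OF Tsub a I ty] ty(1) unfolding Lc_def by blast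
  qed
  then have "\<exists>N. \<forall>n\<ge>N. Lc n = Lc N" by (rule noetherian_subring_ascending_chain[OF T Lc])
  then obtain N where N: "\<forall>n\<ge>N. Lc n = Lc N" ..
  obtain E where E: "finite E" "E \<subseteq> Lc N" "Lc N = span_over T E"
    using noetherian_subringD(2)[OF T Lc(2) Lc(1)] by metis
  show ?thesis
  proof (rule that[of E N])
    show "finite E" "E \<subseteq> T" using E Lc(2) by auto
    show "\<exists>y\<in>adjoin_below T a N. e \<otimes> a [^] N \<oplus> y \<in> I" if "e \<in> E" for e
      using that E(2) unfolding Lc_def by blast
    show "t \<in> span_over T E" if "N \<le> k" "t \<in> T" "y \<in> adjoin_below T a k" "t \<otimes> a [^] k \<oplus> y \<in> I"
      for k t y
    proof -
      have "t \<in> Lc k" using that unfolding Lc_def by blast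
      then show ?thesis using N that(1) E(3) by simp
    qed
  qed
qed

lemma adjoin_lift_leading_term:
  assumes T: "subring T R" and a: "a \<in> carrier R" and E: "E \<subseteq> T"
    and w: "\<And>e. e \<in> E \<Longrightarrow> \<exists>y\<in>adjoin_below T a N. w e = e \<otimes> a [^] N \<oplus> y"
    and t: "t \<in> span_over T E" and k: "N \<le> k"
  shows "\<exists>q\<in>span_over (adjoin T a) (w ` E). \<exists>y\<in>adjoin_below T a k. q = t \<otimes> a [^] k \<oplus> y"
proof -
  have TC: "T \<subseteq> carrier R" using subringE(1)[OF T] .
  note B = adjoin_below_submodule[OF T a]
  obtain m where m: "m \<in> adjoin_below T a N" "t \<otimes> a [^] N \<oplus> m \<in> span_over T (w ` E)"
    using span_over_lift[OF T B _ E w t] a by auto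
  have wC: "w ` E \<subseteq> carrier R"
    using w E TC submodule_overD(1)[OF B] a by fastforce
  note A = span_over_submodule[OF adjoin_subring[OF T a] wC]
  define q where "q = a [^] (k - N) \<otimes> (t \<otimes> a [^] N \<oplus> m)"
  have "t \<otimes> a [^] N \<oplus> m \<in> span_over (adjoin T a) (w ` E)"
    using m(2) span_over_mono[OF subset_adjoin(1)[OF T a], of "w ` E" "w ` E"] by blast
  then have "q \<in> span_over (adjoin T a) (w ` E)"
    unfolding q_def using submodule_overD(4)[OF A nat_pow_in_adjoin[OF T a]] by blast
  moreover have "a [^] (k - N) \<otimes> m \<in> adjoin_below T a k"
    using nat_pow_mult_adjoin_below[OF T a m(1), of "k - N"] k by simp
  moreover have "q = t \<otimes> a [^] k \<oplus> a [^] (k - N) \<otimes> m"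
  proof -
    have "t \<in> carrier R" "m \<in> carrier R" "a [^] (k - N) \<in> carrier R" "a [^] N \<in> carrier R"
      using span_over_carrier[OF TC] t E TC m(1) submodule_overD(1)[OF B] a by blast+
    then have "q = t \<otimes> (a [^] (k - N) \<otimes> a [^] N) \<oplus> a [^] (k - N) \<otimes> m"
      unfolding q_def by algebra
    also have "a [^] (k - N) \<otimes> a [^] N = a [^] k" using a k by (simp add: nat_pow_mult)
    finally show ?thesis .
  qed
  ultimately show ?thesis by blast
qed

lemma adjoin_degree_reduction_step:
  assumes T: "subring T R" and a: "a \<in> carrier R" and I: "submodule_over (adjoin T a) I"
    and E: "E \<subseteq> T"
    and w: "\<And>e. e \<in> E \<Longrightarrow> w e \<in> I \<and> (\<exists>y\<in>adjoin_below T a N. w e = e \<otimes> a [^] N \<oplus> y)"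
    and lc: "\<And>k t y. N \<le> k \<Longrightarrow> t \<in> T \<Longrightarrow> y \<in> adjoin_below T a k \<Longrightarrow> t \<otimes> a [^] k \<oplus> y \<in> I
      \<Longrightarrow> t \<in> span_over T E"
    and x: "x \<in> I" "x \<in> adjoin_below T a (Suc k)" and k: "N \<le> k"
  shows "\<exists>q\<in>span_over (adjoin T a) (w ` E). x \<ominus> q \<in> I \<inter> adjoin_below T a k"
proof -
  note B = adjoin_below_submodule[OF T a]
  obtain t y where ty: "x = t \<otimes> a [^] k \<oplus> y" "t \<in> T" "y \<in> adjoin_below T a k"
    using x(2) adjoin_below_Suc[OF T a] by blast
  then have t: "t \<in> span_over T E" using lc[OF k] x(1) by blast
  have "\<And>e. e \<in> E \<Longrightarrow> \<exists>y\<in>adjoin_below T a N. w e = e \<otimes> a [^] N \<oplus> y" using w by blast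
  then obtain q y' where q: "q \<in> span_over (adjoin T a) (w ` E)" "y' \<in> adjoin_below T a k"
    "q = t \<otimes> a [^] k \<oplus> y'"
    using adjoin_lift_leading_term[OF T a E _ t k] by blast
  have "t \<in> carrier R" "y \<in> carrier R" "y' \<in> carrier R" "a [^] k \<in> carrier R"
    using ty q subringE(1)[OF T] submodule_overD(1)[OF B] a by auto
  then have "x \<ominus> q = y \<ominus> y'" unfolding ty(1) q(3) by algebra
  then have "x \<ominus> q \<in> adjoin_below T a k" using submodule_over_minus[OF T B ty(3) q(2)] by simp
  moreover have "q \<in> I" using span_over_minimal[OF I] w q(1) by blast
  then have "x \<ominus> q \<in> I" using submodule_over_minus[OF adjoin_subring[OF T a] I x(1)] by blast
  ultimately show ?thesis using q(1) by blast
qed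

lemma adjoin_degree_reduction:
  assumes T: "subring T R" and a: "a \<in> carrier R" and I: "submodule_over (adjoin T a) I"
    and E: "E \<subseteq> T"
    and w: "\<And>e. e \<in> E \<Longrightarrow> w e \<in> I \<and> (\<exists>y\<in>adjoin_below T a N. w e = e \<otimes> a [^] N \<oplus> y)"
    and lc: "\<And>k t y. N \<le> k \<Longrightarrow> t \<in> T \<Longrightarrow> y \<in> adjoin_below T a k \<Longrightarrow> t \<otimes> a [^] k \<oplus> y \<in> I
      \<Longrightarrow> t \<in> span_over T E"
    and x: "x \<in> I" "x \<in> adjoin_below T a m"
  shows "\<exists>z\<in>span_over (adjoin T a) (w ` E). x \<ominus> z \<in> adjoin_below T a N"
  using x
proof (induction m arbitrary: x)
  case 0
  then have "x \<ominus> \<zero> = \<zero>" by (simp add: adjoin_below_def span_over_empty a_minus_def)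
  then have "x \<ominus> \<zero> \<in> adjoin_below T a N"
    using submodule_overD(2)[OF adjoin_below_submodule[OF T a]] by simp
  then show ?case using span_over.zero by blast
next
  case (Suc k)
  have W: "span_over (adjoin T a) (w ` E) \<subseteq> I" using span_over_minimal[OF I] w by blast
  show ?case
  proof (cases "N \<le> k")
    case True
    have "\<exists>q\<in>span_over (adjoin T a) (w ` E). x \<ominus> q \<in> I \<inter> adjoin_below T a k"
      by (rule adjoin_degree_reduction_step[OF T a I E]) (auto intro: lc Suc.prems True simp: w)
    then obtain q where q: "q \<in> span_over (adjoin T a) (w ` E)" "x \<ominus> q \<in> I \<inter> adjoin_below T a k" ..
    then obtain z where z: "z \<in> span_over (adjoin T a) (w ` E)" "(x \<ominus> q) \<ominus> z \<in> adjoin_below T a N"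
      using Suc.IH by blast
    have "x \<in> carrier R" "q \<in> carrier R" "z \<in> carrier R"
      using Suc.prems(1) q(1) z(1) W submodule_overD(1)[OF I] by auto
    then have "(x \<ominus> q) \<ominus> z = x \<ominus> (q \<oplus> z)" by algebra
    moreover have "q \<oplus> z \<in> span_over (adjoin T a) (w ` E)" using q(1) z(1) by (rule span_over.add)
    ultimately show ?thesis using z(2) by auto
  next
    case False
    then have "x \<in> adjoin_below T a N" using Suc.prems(2) adjoin_below_mono[of "Suc k" N] by auto
    moreover have "x \<ominus> \<zero> = x" using Suc.prems(1) submodule_overD(1)[OF I] by (auto simp: a_minus_def)
    ultimately show ?thesis using span_over.zero by (intro bexI[of _ \<zero>]) auto
  qed
qed

lemma noetherian_adjoin:
  assumes T: "noetherian_subring T" and a: "a \<in> carrier R"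
  shows "noetherian_subring (adjoin T a)"
  unfolding noetherian_subring_def
proof (intro conjI allI impI)
  have Tsub: "subring T R" using noetherian_subringD(1)[OF T] .
  show A: "subring (adjoin T a) R" using adjoin_subring[OF Tsub a] .
  fix I assume "I \<subseteq> adjoin T a \<and> submodule_over (adjoin T a) I"
  then have IA: "I \<subseteq> adjoin T a" and I: "submodule_over (adjoin T a) I" by auto
  obtain N E where E: "finite E" "E \<subseteq> T"
    and lift: "\<And>e. e \<in> E \<Longrightarrow> \<exists>y\<in>adjoin_below T a N. e \<otimes> a [^] N \<oplus> y \<in> I"
    and lc: "\<And>k t y. N \<le> k \<Longrightarrow> t \<in> T \<Longrightarrow> y \<in> adjoin_below T a k \<Longrightarrow> t \<otimes> a [^] k \<oplus> y \<in> I
      \<Longrightarrow> t \<in> span_over T E"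
    using leading_coefficients_stabilize[OF T a I] by metis
  obtain w where w: "\<And>e. e \<in> E \<Longrightarrow> w e \<in> I \<and> (\<exists>y\<in>adjoin_below T a N. w e = e \<otimes> a [^] N \<oplus> y)"
    using choose_lifts[OF lift] by blast
  have "submodule_over T (I \<inter> adjoin_below T a N)"
    using submodule_over_Int[OF submodule_over_mono[OF subset_adjoin(1)[OF Tsub a] I]
      adjoin_below_submodule[OF Tsub a]] .
  then have "\<exists>H. finite H \<and> H \<subseteq> I \<inter> adjoin_below T a N \<and> I \<inter> adjoin_below T a N = span_over T H"
    using a unfolding adjoin_below_def
    by (intro noetherian_submodule_finitely_generated[OF T, of "(\<lambda>i. a [^] i) ` {..<N}"]) auto
  then obtain H where H: "finite H" "H \<subseteq> I \<inter> adjoin_below T a N"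
    "I \<inter> adjoin_below T a N = span_over T H" by metis
  have "I = span_over (adjoin T a) (H \<union> w ` E)"
  proof (rule submodule_over_eq_span_over[OF A I])
    show "H \<subseteq> I" "w ` E \<subseteq> I" using H(2) w by auto
    show "I \<inter> adjoin_below T a N \<subseteq> span_over (adjoin T a) H"
      using H(3) span_over_mono[OF subset_adjoin(1)[OF Tsub a], of H H] by simp
    fix x assume x: "x \<in> I"
    then obtain m where m: "x \<in> adjoin_below T a m" using IA adjoin_eq_Union_adjoin_below by blast
    show "\<exists>z\<in>span_over (adjoin T a) (w ` E). x \<ominus> z \<in> adjoin_below T a N"
      using adjoin_degree_reduction[where w = w and N = N, OF Tsub a I E(2) w lc x m] .
  qed
  moreover have "finite (H \<union> w ` E)" "H \<union> w ` E \<subseteq> I" using H(1,2) E(1) w by auto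
  ultimately show "\<exists>F. finite F \<and> F \<subseteq> I \<and> I = span_over (adjoin T a) F"
    by (intro exI[of _ "H \<union> w ` E"] conjI)
qed

lemma noetherian_generate_ring:
  assumes K: "noetherian_subring K" and F: "finite F" "F \<subseteq> carrier R"
  shows "noetherian_subring (generate_ring R (K \<union> F))"
  using F
proof (induction F rule: finite_induct)
  case empty
  have Ksub: "subring K R" using noetherian_subringD(1)[OF K] .
  have "generate_ring R K = K"
    using subringE(1)[OF Ksub] Ksub by (intro generate_ringI[symmetric]) auto
  then show ?case using K by simp
next
  case (insert a F)
  have "K \<union> F \<subseteq> carrier R" using insert.prems subringE(1)[OF noetherian_subringD(1)[OF K]] by blast
  then have "generate_ring R (K \<union> insert a F) = adjoin (generate_ring R (K \<union> F)) a"
    using generate_ring_insert[of "K \<union> F" a] insert.prems by simp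
  then show ?case using noetherian_adjoin[OF insert.IH] insert.prems by simp
qed

section \<open>The Artin--Tate lemma\<close>

lemma artin_tate_coefficients:
  assumes K: "subring K R" and B: "subring B R" "K \<subseteq> B"
    and S0: "finite S0" "S0 \<subseteq> carrier R" "carrier R = generate_ring R (K \<union> S0)"
    and G: "finite G" "G \<subseteq> carrier R" "carrier R \<subseteq> span_over B G"
  obtains F where "finite F" "F \<subseteq> B" "carrier R \<subseteq> span_over (generate_ring R (K \<union> F)) G"
proof -
  define Q where "Q = S0 \<union> {\<one>} \<union> (\<lambda>(g, h). g \<otimes> h) ` (G \<times> G)"
  have "Q \<subseteq> carrier R" using S0(2) G(2) unfolding Q_def by auto
  then have "finite Q" "Q \<subseteq> span_over B G" using S0(1) G(1,3) unfolding Q_def by auto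
  then obtain F where F: "finite F" "F \<subseteq> B" "Q \<subseteq> span_over F G" by (rule span_over_finite_coefficients)
  define T0 where "T0 = generate_ring R (K \<union> F)"
  have KF: "K \<union> F \<subseteq> carrier R" using F(2) B subringE(1) by blast
  have T0: "subring T0 R" "K \<subseteq> T0" "F \<subseteq> T0"
    unfolding T0_def using generate_ring_is_subring[OF KF] generate_ring.incl[of _ "K \<union> F" R] by auto
  have QT0: "Q \<subseteq> span_over T0 G" using F(3) span_over_mono[OF T0(3), of G G] by blast
  have "subring (span_over T0 G) R"
    using QT0 G(2) unfolding Q_def by (intro span_over_subring[OF T0(1)]) auto
  moreover have "K \<subseteq> span_over T0 G"
  proof
    fix k assume k: "k \<in> K"
    have "k \<otimes> \<one> \<in> span_over T0 G"
      using submodule_overD(4)[OF span_over_submodule[OF T0(1) G(2)]] QT0 k T0(2) unfolding Q_def by blast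
    then show "k \<in> span_over T0 G" using k subringE(1)[OF K] by auto
  qed
  moreover have "S0 \<subseteq> span_over T0 G" using QT0 unfolding Q_def by blast
  ultimately have "carrier R \<subseteq> span_over T0 G"
    using generate_ring_min_subring1[of "K \<union> S0"] S0(2,3) subringE(1)[OF K] by auto
  then show ?thesis unfolding T0_def by (rule that[OF F(1,2)])
qed

theorem artin_tate:
  assumes K: "noetherian_subring K" and B: "subring B R" "K \<subseteq> B"
    and S0: "finite S0" "S0 \<subseteq> carrier R" "carrier R = generate_ring R (K \<union> S0)"
    and G: "finite G" "G \<subseteq> carrier R" "carrier R \<subseteq> span_over B G"
  shows "\<exists>S. finite S \<and> S \<subseteq> B \<and> B = generate_ring R (K \<union> S)"
proof -
  have Ksub: "subring K R" using noetherian_subringD(1)[OF K] .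
  obtain F where F: "finite F" "F \<subseteq> B" "carrier R \<subseteq> span_over (generate_ring R (K \<union> F)) G"
    using artin_tate_coefficients[OF Ksub B S0 G] by blast
  define T0 where "T0 = generate_ring R (K \<union> F)"
  have KF: "K \<union> F \<subseteq> B" using B(2) F(2) by blast
  have BC: "B \<subseteq> carrier R" using subringE(1)[OF B(1)] .
  have T0: "noetherian_subring T0" unfolding T0_def
    using noetherian_generate_ring[OF K F(1)] F(2) BC by blast
  have T0B: "T0 \<subseteq> B" unfolding T0_def using generate_ring_min_subring1[OF _ B(1) KF] KF BC by blast
  have "submodule_over T0 B" using subring_submodule_over[OF B(1) T0B] .
  then have "\<exists>H. finite H \<and> H \<subseteq> B \<and> B = span_over T0 H"
    using noetherian_submodule_finitely_generated[OF T0 G(1,2)] F(3) BC unfolding T0_def by blast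
  then obtain H where H: "finite H" "H \<subseteq> B" "B = span_over T0 H" by metis
  have KFH: "K \<union> (F \<union> H) \<subseteq> carrier R" using KF H(2) BC by blast
  note GS = generate_ring_is_subring[OF KFH]
  have "B \<subseteq> generate_ring R (K \<union> (F \<union> H))"
  proof -
    have "K \<union> F \<subseteq> K \<union> (F \<union> H)" by blast
    then have "T0 \<subseteq> generate_ring R (K \<union> (F \<union> H))"
      unfolding T0_def using mono_generate_ring[OF _ KFH] by blast
    moreover have "H \<subseteq> generate_ring R (K \<union> (F \<union> H))" by (auto intro: generate_ring.incl)
    ultimately show ?thesis
      using H(3) span_over_minimal[OF subring_submodule_over[OF GS]] by simp
  qed
  moreover have "generate_ring R (K \<union> (F \<union> H)) \<subseteq> B"
    using generate_ring_min_subring1[OF KFH B(1)] KF H(2) by blast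
  ultimately have "B = generate_ring R (K \<union> (F \<union> H))" by (rule antisym)
  then show ?thesis using F(1,2) H(1,2) by (intro exI[of _ "F \<union> H"]) auto
qed

end

section \<open>The base ring and operators of order zero\<close>

context cring
begin

lemma calg_minus:
  assumes "is_calg R \<iota>"
  shows "\<iota> (- c) = \<ominus> \<iota> c"
proof -
  have "\<iota> (- c) \<oplus> \<iota> c = \<zero>" "\<iota> (- c) \<in> carrier R" "\<iota> c \<in> carrier R"
    using assms unfolding is_calg_def by (metis add.left_inverse)+
  then show ?thesis by (metis minus_equality)
qed

lemma calg_scalars_noetherian:
  assumes \<iota>: "is_calg R \<iota>"
  shows "noetherian_subring (range \<iota>)"
proof (rule noetherian_subringI_inverses)
  have i: "\<And>c. \<iota> c \<in> carrier R" "\<iota> 0 = \<zero>" "\<iota> 1 = \<one>" "\<And>c d. \<iota> (c + d) = \<iota> c \<oplus> \<iota> d"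
    "\<And>c d. \<iota> (c * d) = \<iota> c \<otimes> \<iota> d" using \<iota> unfolding is_calg_def by auto
  show "subring (range \<iota>) R"
  proof (rule subringI)
    show "range \<iota> \<subseteq> carrier R" using i(1) by blast
    show "\<one> \<in> range \<iota>" using i(3) by (metis rangeI)
    show "\<ominus> x \<in> range \<iota>" if x: "x \<in> range \<iota>" for x
    proof -
      obtain c where "x = \<iota> c" using x by blast
      then have "\<ominus> x = \<iota> (- c)" using calg_minus[OF \<iota>] by simp
      then show ?thesis by simp
    qed
    show "x \<otimes> y \<in> range \<iota>" "x \<oplus> y \<in> range \<iota>" if xy: "x \<in> range \<iota>" "y \<in> range \<iota>" for x y
    proof -
      obtain c d where "x = \<iota> c" "y = \<iota> d" using xy by blast
      then have "x \<otimes> y = \<iota> (c * d)" "x \<oplus> y = \<iota> (c + d)" using i(4,5) by simp_all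
      then show "x \<otimes> y \<in> range \<iota>" "x \<oplus> y \<in> range \<iota>" by simp_all
    qed
  qed
  fix k assume "k \<in> range \<iota>" "k \<noteq> \<zero>"
  then obtain c where c: "k = \<iota> c" "c \<noteq> 0" using i(2) by blast
  then have "\<iota> (inverse c) \<otimes> k = \<one>" using i(5)[of "inverse c" c] i(3) by simp
  then show "\<exists>k'\<in>range \<iota>. k' \<otimes> k = \<one>" by blast
qed

lemma mult_op_comp:
  "r \<in> carrier R \<Longrightarrow> s \<in> carrier R \<Longrightarrow> op_comp R (mult_op R r) (mult_op R s) = mult_op R (r \<otimes> s)"
  unfolding op_comp_def mult_op_def by (auto simp: m_assoc)

lemma mult_op_add:
  "r \<in> carrier R \<Longrightarrow> s \<in> carrier R \<Longrightarrow> op_add R (mult_op R r) (mult_op R s) = mult_op R (r \<oplus> s)"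
  unfolding op_add_def mult_op_def by (auto simp: l_distr)

lemma op_zero_eq_mult_op_zero: "op_zero R = mult_op R \<zero>"
  unfolding op_zero_def mult_op_def by auto

lemma commutator_mult_op:
  "r \<in> carrier R \<Longrightarrow> s \<in> carrier R \<Longrightarrow> commutator R (mult_op R r) s = op_zero R"
  unfolding commutator_def op_minus_def op_comp_def mult_op_def op_zero_def
  by (auto simp: m_lcomm[of r s])

lemma clinear_mult_op: "is_calg R \<iota> \<Longrightarrow> r \<in> carrier R \<Longrightarrow> clinear R \<iota> (mult_op R r)"
  unfolding clinear_def mult_op_def is_calg_def by (auto simp: r_distr m_lcomm)

lemma mult_op_diffop_le:
  assumes \<iota>: "is_calg R \<iota>"
  shows "r \<in> carrier R \<Longrightarrow> mult_op R r \<in> diffop_le R \<iota> n"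
proof (induction n arbitrary: r)
  case 0 then show ?case using clinear_mult_op[OF \<iota>] commutator_mult_op by simp
next
  case (Suc n)
  have "op_zero R \<in> diffop_le R \<iota> n" using Suc.IH[of \<zero>] op_zero_eq_mult_op_zero by simp
  then show ?case using Suc.prems clinear_mult_op[OF \<iota>] commutator_mult_op by simp
qed

lemma diffop_le_0_eq_mult_op:
  assumes "\<phi> \<in> diffop_le R \<iota> 0"
  shows "\<phi> \<one> \<in> carrier R" "\<phi> = mult_op R (\<phi> \<one>)"
proof -
  have cl: "clinear R \<iota> \<phi>" and com: "\<And>r. r \<in> carrier R \<Longrightarrow> commutator R \<phi> r = op_zero R"
    using assms by auto
  have fC: "\<phi> \<in> carrier R \<rightarrow> carrier R" and fU: "\<And>x. x \<notin> carrier R \<Longrightarrow> \<phi> x = undefined"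
    using cl unfolding clinear_def by auto
  show p1: "\<phi> \<one> \<in> carrier R" using fC by auto
  have "\<phi> x = mult_op R (\<phi> \<one>) x" for x
  proof (cases "x \<in> carrier R")
    case True
    have "commutator R \<phi> x \<one> = \<zero>" using com[OF True] unfolding op_zero_def by simp
    then have "\<phi> x \<ominus> x \<otimes> \<phi> \<one> = \<zero>"
      unfolding commutator_def op_minus_def op_comp_def mult_op_def using True p1 by simp
    moreover have "\<phi> x \<in> carrier R" using fC True by blast
    ultimately have "\<phi> x = x \<otimes> \<phi> \<one>" using True p1 by simp
    then show ?thesis unfolding mult_op_def using True p1 by (simp add: m_comm)
  next
    case False then show ?thesis using fU unfolding mult_op_def by auto
  qed
  then show "\<phi> = mult_op R (\<phi> \<one>)" by (intro ext)
qed

lemma base_ring_subring: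
  assumes \<iota>: "is_calg R \<iota>" and \<A>: "diffop_subalgebra R \<iota> \<A>"
  shows "subring (base_ring R \<A>) R" "range \<iota> \<subseteq> base_ring R \<A>"
proof -
  have iC: "\<iota> c \<in> carrier R" for c using \<iota> unfolding is_calg_def by blast
  have one: "mult_op R \<one> \<in> \<A>"
    and closed: "\<And>\<phi> \<psi>. \<phi> \<in> \<A> \<Longrightarrow> \<psi> \<in> \<A> \<Longrightarrow> op_add R \<phi> \<psi> \<in> \<A> \<and> op_comp R \<phi> \<psi> \<in> \<A>"
    and scalar: "\<And>c \<phi>. \<phi> \<in> \<A> \<Longrightarrow> op_comp R (mult_op R (\<iota> c)) \<phi> \<in> \<A>"
    using \<A> unfolding diffop_subalgebra_def by auto
  have mem: "b \<in> base_ring R \<A> \<longleftrightarrow> b \<in> carrier R \<and> mult_op R b \<in> \<A>" for b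
    unfolding base_ring_def by blast
  have scalar_mult: "\<iota> c \<otimes> b \<in> base_ring R \<A>" if "b \<in> base_ring R \<A>" for b c
    using that scalar[of "mult_op R b" c] mult_op_comp[OF iC, of b c] iC[of c] mem by auto
  show "range \<iota> \<subseteq> base_ring R \<A>"
    using scalar_mult[of \<one>] mem one iC by auto
  show "subring (base_ring R \<A>) R"
  proof (rule subringI)
    show "base_ring R \<A> \<subseteq> carrier R" "\<one> \<in> base_ring R \<A>" using mem one by auto
    show "\<ominus> h \<in> base_ring R \<A>" if "h \<in> base_ring R \<A>" for h
      using scalar_mult[OF that, of "- 1"] calg_minus[OF \<iota>, of 1] \<iota> that mem
      unfolding is_calg_def by (auto simp: l_minus)
    show "h1 \<otimes> h2 \<in> base_ring R \<A>" "h1 \<oplus> h2 \<in> base_ring R \<A>"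
      if "h1 \<in> base_ring R \<A>" "h2 \<in> base_ring R \<A>" for h1 h2
    proof -
      have h: "h1 \<in> carrier R" "h2 \<in> carrier R" "mult_op R h1 \<in> \<A>" "mult_op R h2 \<in> \<A>"
        using that mem by auto
      show "h1 \<otimes> h2 \<in> base_ring R \<A>"
        using closed[OF h(3,4)] mult_op_comp[OF h(1,2)] h(1,2) mem by auto
      show "h1 \<oplus> h2 \<in> base_ring R \<A>"
        using closed[OF h(3,4)] mult_op_add[OF h(1,2)] h(1,2) mem by auto
    qed
  qed
qed

lemma gr_combination_degree0:
  assumes "\<And>a. a \<in> set as \<Longrightarrow> a 0 \<in> mult_op R ` B" "\<And>g. g \<in> set gs \<Longrightarrow> g 0 \<in> mult_op R ` \<Gamma>"
    and "B \<subseteq> carrier R" "\<Gamma> \<subseteq> carrier R"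
  shows "foldr (gr_add R) (map2 (gr_mul R) as gs) (gr_zero R) 0 \<one> \<in> span_over B \<Gamma>"
  using assms(1,2)
proof (induction as arbitrary: gs)
  case Nil then show ?case by (simp add: gr_zero_def op_zero_def span_over.zero)
next
  case (Cons a as)
  show ?case
  proof (cases gs)
    case Nil then show ?thesis by (simp add: gr_zero_def op_zero_def span_over.zero)
  next
    case (Cons g gs')
    obtain \<alpha> \<gamma> where ag: "\<alpha> \<in> B" "\<gamma> \<in> \<Gamma>" "a 0 = mult_op R \<alpha>" "g 0 = mult_op R \<gamma>"
      using Cons.prems Cons by fastforce
    have "\<alpha> \<in> carrier R" "\<gamma> \<in> carrier R" using ag assms(3,4) by auto
    then have "gr_mul R a g 0 \<one> = \<alpha> \<otimes> \<gamma>"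
      using ag by (simp add: gr_mul_def op_sum_def op_add_def op_comp_def mult_op_def op_zero_def)
    moreover have "foldr (gr_add R) (map2 (gr_mul R) as gs') (gr_zero R) 0 \<one> \<in> span_over B \<Gamma>"
      using Cons.IH Cons.prems Cons by simp
    moreover have "foldr (gr_add R) (map2 (gr_mul R) (a # as) gs) (gr_zero R) 0 \<one>
        = gr_mul R a g 0 \<one> \<oplus> foldr (gr_add R) (map2 (gr_mul R) as gs') (gr_zero R) 0 \<one>"
      using Cons by (simp add: gr_add_def op_add_def)
    ultimately show ?thesis using ag(1,2) by (simp add: span_over.add span_over.gen)
  qed
qed

lemma gr_elem_degree0:
  assumes "is_calg R \<iota>" "r \<in> carrier R"
  shows "gr_elem R \<iota> (diffops R \<iota>) (\<lambda>d. if d = 0 then mult_op R r else op_zero R)"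
  unfolding gr_elem_def
proof
  have "op_zero R \<in> diffop_le R \<iota> d" for d
    using mult_op_diffop_le[OF assms(1) zero_closed] op_zero_eq_mult_op_zero by simp
  then show "\<forall>d. (if d = 0 then mult_op R r else op_zero R) \<in> diffops R \<iota> \<inter> diffop_le R \<iota> d"
    using mult_op_diffop_le[OF assms] unfolding diffops_def by (auto simp del: diffop_le.simps)
  have "{d. (if d = 0 then mult_op R r else op_zero R) \<notin> diffop_prev R \<iota> d} \<subseteq> {0}"
    using \<open>\<And>d. op_zero R \<in> diffop_le R \<iota> d\<close> unfolding diffop_prev_def by auto
  then show "finite {d. (if d = 0 then mult_op R r else op_zero R) \<notin> diffop_prev R \<iota> d}"
    by (rule finite_subset) simp
qed

lemma gr_elem_degree0_mult_op:
  assumes "gr_elem R \<iota> B \<phi>"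
  shows "\<phi> 0 \<in> B" "\<phi> 0 \<one> \<in> carrier R" "\<phi> 0 = mult_op R (\<phi> 0 \<one>)"
  using assms diffop_le_0_eq_mult_op[of "\<phi> 0"] unfolding gr_elem_def by blast+

lemma gr_elem_degree0_base_ring:
  assumes "gr_elem R \<iota> \<A> \<phi>"
  shows "\<phi> 0 \<in> mult_op R ` base_ring R \<A>"
proof -
  note \<phi> = gr_elem_degree0_mult_op[OF assms]
  have "mult_op R (\<phi> 0 \<one>) \<in> \<A>" using \<phi>(1,3) by metis
  then have "\<phi> 0 \<one> \<in> base_ring R \<A>" using \<phi>(2) unfolding base_ring_def by blast
  then show ?thesis using \<phi>(3) by (metis image_eqI)
qed

lemma gr_eq_degree0:
  assumes "gr_eq R \<iota> s t" "s 0 = mult_op R r" "r \<in> carrier R" "t 0 \<one> \<in> carrier R"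
  shows "t 0 \<one> = r"
proof -
  have "op_minus R (s 0) (t 0) = op_zero R"
    using assms(1) unfolding gr_eq_def diffop_prev_def by (metis singletonD)
  then have "r \<ominus> t 0 \<one> = \<zero>" using assms(2,3) by (metis op_minus_def op_zero_def mult_op_def one_closed r_one)
  then show ?thesis using assms(3,4) by simp
qed

lemma graded_cofinite_degree0:
  assumes \<iota>: "is_calg R \<iota>" and gc: "graded_cofinite R \<iota> \<A>"
  obtains \<Gamma> where "finite \<Gamma>" "\<Gamma> \<subseteq> carrier R" "carrier R \<subseteq> span_over (base_ring R \<A>) \<Gamma>"
proof -
  obtain gs where gs: "\<forall>g\<in>set gs. gr_elem R \<iota> (diffops R \<iota>) g"
    and span: "\<And>s. gr_elem R \<iota> (diffops R \<iota>) s \<Longrightarrow>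
      \<exists>as. length as = length gs \<and> (\<forall>a\<in>set as. gr_elem R \<iota> \<A> a) \<and>
        gr_eq R \<iota> s (foldr (gr_add R) (map2 (gr_mul R) as gs) (gr_zero R))"
    using gc unfolding graded_cofinite_def by blast
  define \<Gamma> where "\<Gamma> = (\<lambda>g. g 0 \<one>) ` set gs"
  have \<Gamma>: "finite \<Gamma>" "\<Gamma> \<subseteq> carrier R" unfolding \<Gamma>_def using gs gr_elem_degree0_mult_op(2) by blast+
  have \<Gamma>_gens: "g 0 \<in> mult_op R ` \<Gamma>" if "g \<in> set gs" for g
    using gr_elem_degree0_mult_op(3) gs that unfolding \<Gamma>_def by blast
  have BC: "base_ring R \<A> \<subseteq> carrier R" unfolding base_ring_def by blast
  have "r \<in> span_over (base_ring R \<A>) \<Gamma>" if r: "r \<in> carrier R" for r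
  proof -
    obtain as where as: "\<forall>a\<in>set as. gr_elem R \<iota> \<A> a"
      and eq: "gr_eq R \<iota> (\<lambda>d. if d = 0 then mult_op R r else op_zero R)
        (foldr (gr_add R) (map2 (gr_mul R) as gs) (gr_zero R))"
      using span[OF gr_elem_degree0[OF \<iota> r]] by blast
    have comb: "foldr (gr_add R) (map2 (gr_mul R) as gs) (gr_zero R) 0 \<one> \<in> span_over (base_ring R \<A>) \<Gamma>"
      using as gr_elem_degree0_base_ring \<Gamma>_gens by (intro gr_combination_degree0[OF _ _ BC \<Gamma>(2)]) auto
    moreover have "foldr (gr_add R) (map2 (gr_mul R) as gs) (gr_zero R) 0 \<one> \<in> carrier R"
      using comb span_over_carrier[OF BC \<Gamma>(2)] by blast
    ultimately show ?thesis using gr_eq_degree0[OF eq _ r] by simp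
  qed
  then show ?thesis using that \<Gamma> by blast
qed

end

theorem proposition2p1:
  fixes R :: "('a, 'b) ring_scheme" and \<iota> :: "complex \<Rightarrow> 'a" and \<A> :: "('a \<Rightarrow> 'a) set"
  assumes "affine_variety R \<iota>"
    and "diffop_subalgebra R \<iota> \<A>"
    and "graded_cofinite R \<iota> \<A>"
  shows "fg_calg R \<iota> (base_ring R \<A>) \<and> fg_module_over R (base_ring R \<A>)"
proof -
  have \<iota>: "is_calg R \<iota>" and fg: "fg_calg R \<iota> (carrier R)"
    using assms(1) unfolding affine_variety_def by auto
  interpret cring R using \<iota> unfolding is_calg_def by blast
  obtain \<Gamma> where \<Gamma>: "finite \<Gamma>" "\<Gamma> \<subseteq> carrier R" "carrier R \<subseteq> span_over (base_ring R \<A>) \<Gamma>"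
    using graded_cofinite_degree0[OF \<iota> assms(3)] by blast
  note B = base_ring_subring[OF \<iota> assms(2)]
  obtain S0 where S0: "finite S0" "S0 \<subseteq> carrier R" "carrier R = generate_ring R (range \<iota> \<union> S0)"
    using fg unfolding fg_calg_def by blast
  have "fg_calg R \<iota> (base_ring R \<A>)"
    using artin_tate[OF calg_scalars_noetherian[OF \<iota>] B(1,2) S0 \<Gamma>] unfolding fg_calg_def .
  moreover have "fg_module_over R (base_ring R \<A>)"
    using \<Gamma> span_over_finsum[OF B(1) \<Gamma>(1,2)] unfolding fg_module_over_def by blast
  ultimately show ?thesis ..
qed

end
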